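(* Consider the joint caching and recommendation problem $$\max_{\mathbf X,\mathbf Y}\ \sum_{u=1}^{U}\sum_{i=1}^{N} y_i\Big[w_u^{\mathrm{rec}}\frac{x_{ui}}{R}+(1-w_u^{\mathrm{rec}})\,p_u^{\mathrm{pref}}(i)\Big]$$ subject to $\sum_i y_i\le C$, $\sum_i x_{ui}\le R$ for all $u$, and $x_{ui},y_i\in\{0,1\}$ for all $u,i$, where $1\le R\le C\le N$. Then the maximum is attained by caching a set $\mathbf Y^*$ of $C$ contents maximizing $\sum_i y_i\,\hat p_i$ (i.e. $C$ contents with largest $\hat p_i$) and, for each user $u$, recommending any $R$ contents among the cached ones ($x_{ui}=1$ only if $y_i=1$). In particular, the optimal caching decision is $$\mathbf Y^*\in\operatorname{argmax}_{\mathbf Y:\ \sum_i y_i\le C}\ \sum_i y_i\sum_u(1-w_u^{\mathrm{rec}})p_u^{\mathrm{pref}}(i).$$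
   Context: There are $N$ contents $\mathcal N=\{1,\dots,N\}$ and $U$ users $\mathcal U=\{1,\dots,U\}$. A base station has a cache of capacity $C$ contents and recommends at most $R\le C$ contents to each user. $y_i\in\{0,1\}$ indicates whether content $i$ is cached; $x_{ui}\in\{0,1\}$ indicates whether content $i$ is recommended to user $u$. For each user $u$, $p_u^{\mathrm{pref}}(\cdot)$ is a probability distribution on $\mathcal N$ (the request distribution without recommendations), and $w_u^{\mathrm{rec}}\in[0,1]$ is the probability that user $u$ accepts recommendations. The request probability of user $u$ for content $i$ is $p_u^{\mathrm{req}}(i)=w_u^{\mathrm{rec}}\,x_{ui}/R+(1-w_u^{\mathrm{rec}})p_u^{\mathrm{pref}}(i)$ (users choose uniformly among recommended contents). Define $\hat p_i:=\sum_u(1-w_u^{\mathrm{rec}})p_u^{\mathrm{pref}}(i)$. *)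

theory Defs
  imports Complex_Main
begin

text \<open>Binary decisions are encoded by sets: the cache is the set Y of contents i with y_i = 1,
  and X u is the set of contents i with x_ui = 1. Contents are 1..N, users are 1..U.\<close>

definition feasible :: "nat \<Rightarrow> nat \<Rightarrow> nat \<Rightarrow> nat \<Rightarrow> (nat \<Rightarrow> nat set) \<Rightarrow> nat set \<Rightarrow> bool" where
  "feasible N U C R X Y \<longleftrightarrow>
     Y \<subseteq> {1..N} \<and> card Y \<le> C \<and>
     (\<forall>u\<in>{1..U}. X u \<subseteq> {1..N} \<and> card (X u) \<le> R)"

definition objective ::
  "nat \<Rightarrow> nat \<Rightarrow> nat \<Rightarrow> (nat \<Rightarrow> real) \<Rightarrow> (nat \<Rightarrow> nat \<Rightarrow> real) \<Rightarrow> (nat \<Rightarrow> nat set) \<Rightarrow> nat set \<Rightarrow> real" where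
  "objective N U R w p X Y =
     (\<Sum>u\<in>{1..U}. \<Sum>i\<in>{1..N}.
        (if i \<in> Y then 1 else 0) *
        (w u * (if i \<in> X u then 1 else 0) / real R + (1 - w u) * p u i))"

definition phat :: "nat \<Rightarrow> (nat \<Rightarrow> real) \<Rightarrow> (nat \<Rightarrow> nat \<Rightarrow> real) \<Rightarrow> nat \<Rightarrow> real" where
  "phat U w p i = (\<Sum>u\<in>{1..U}. (1 - w u) * p u i)"

end

theory Submission
  imports Defs
begin

text \<open>Cached contents contribute through two separate terms: user u gains w u / R for each
  recommended content that is also cached, which is at most w u and equals w u exactly when
  R cached contents are recommended; the remaining term depends on the cache alone and equals
  the total \<open>phat\<close>-weight of the cache, which an optimal cache maximizes.\<close>

definition recommendation_value ::
  "nat \<Rightarrow> nat \<Rightarrow> (nat \<Rightarrow> real) \<Rightarrow> (nat \<Rightarrow> nat set) \<Rightarrow> nat set \<Rightarrow> real" where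
  "recommendation_value U R w X Y = (\<Sum>u\<in>{1..U}. w u * real (card (Y \<inter> X u)) / real R)"

lemma sum_indicator_mult_subset:
  fixes f :: "'a \<Rightarrow> 'b::semiring_1"
  assumes "finite B" and "A \<subseteq> B"
  shows "(\<Sum>i\<in>B. (if i \<in> A then 1 else 0) * f i) = sum f A"
proof -
  have "(\<Sum>i\<in>B. (if i \<in> A then 1 else 0) * f i) = (\<Sum>i\<in>B. if i \<in> A then f i else 0)"
    by (intro sum.cong) auto
  also have "\<dots> = sum f (B \<inter> A)"
    using assms(1) by (rule sum.inter_restrict[symmetric])
  finally show ?thesis
    using assms(2) by (simp add: Int_absorb1)
qed

lemma objective_split:
  assumes "Y \<subseteq> {1..N}"
  shows "objective N U R w p X Y = recommendation_value U R w X Y + (\<Sum>i\<in>Y. phat U w p i)"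
proof -
  have "finite Y"
    using assms finite_subset by blast
  have user_term: "(\<Sum>i\<in>Y. w u * (if i \<in> X u then 1 else 0) / real R + (1 - w u) * p u i)
      = w u * real (card (Y \<inter> X u)) / real R + (\<Sum>i\<in>Y. (1 - w u) * p u i)" for u
  proof -
    have "(\<Sum>i\<in>Y. w u * (if i \<in> X u then 1 else 0) / real R)
        = (\<Sum>i\<in>Y. if i \<in> X u then w u / real R else 0)"
      by (intro sum.cong) auto
    also have "\<dots> = w u * real (card (Y \<inter> X u)) / real R"
      using \<open>finite Y\<close> by (simp add: sum.inter_restrict[symmetric])
    finally show ?thesis
      by (simp add: sum.distrib)
  qed
  have "objective N U R w p X Y
      = (\<Sum>u\<in>{1..U}. \<Sum>i\<in>Y. w u * (if i \<in> X u then 1 else 0) / real R + (1 - w u) * p u i)"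
    unfolding objective_def using assms by (simp add: sum_indicator_mult_subset)
  also have "\<dots> = recommendation_value U R w X Y + (\<Sum>u\<in>{1..U}. \<Sum>i\<in>Y. (1 - w u) * p u i)"
    unfolding recommendation_value_def user_term by (rule sum.distrib)
  also have "(\<Sum>u\<in>{1..U}. \<Sum>i\<in>Y. (1 - w u) * p u i) = (\<Sum>i\<in>Y. phat U w p i)"
    unfolding phat_def by (rule sum.swap)
  finally show ?thesis .
qed

lemma recommendation_value_le:
  assumes "1 \<le> R" and "\<forall>u\<in>{1..U}. 0 \<le> w u"
    and "\<forall>u\<in>{1..U}. finite (X u) \<and> card (X u) \<le> R"
  shows "recommendation_value U R w X Y \<le> (\<Sum>u\<in>{1..U}. w u)"
  unfolding recommendation_value_def
proof (rule sum_mono)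
  fix u assume u: "u \<in> {1..U}"
  have "card (Y \<inter> X u) \<le> card (X u)"
    using assms(3) u by (simp add: card_mono)
  with assms(3) u have "real (card (Y \<inter> X u)) \<le> real R"
    by force
  with assms(2) u have "w u * real (card (Y \<inter> X u)) \<le> w u * real R"
    by (intro mult_left_mono) auto
  with assms(1) show "w u * real (card (Y \<inter> X u)) / real R \<le> w u"
    by (simp add: divide_le_eq)
qed

lemma recommendation_value_cached:
  assumes "1 \<le> R" and "\<forall>u\<in>{1..U}. X u \<subseteq> Y \<and> card (X u) = R"
  shows "recommendation_value U R w X Y = (\<Sum>u\<in>{1..U}. w u)"
  unfolding recommendation_value_def
proof (rule sum.cong)
  fix u assume "u \<in> {1..U}"
  with assms show "w u * real (card (Y \<inter> X u)) / real R = w u"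
    by (simp add: Int_absorb1)
qed simp

theorem mainTheorem1:
  fixes N U C R :: nat
    and w :: "nat \<Rightarrow> real" and p :: "nat \<Rightarrow> nat \<Rightarrow> real"
    and Xs :: "nat \<Rightarrow> nat set" and Ys :: "nat set"
  assumes R_pos: "1 \<le> R" and RC: "R \<le> C" and CN: "C \<le> N"
    and w_range: "\<forall>u\<in>{1..U}. 0 \<le> w u \<and> w u \<le> 1"
    and p_nonneg: "\<forall>u\<in>{1..U}. \<forall>i\<in>{1..N}. 0 \<le> p u i"
    and p_sum: "\<forall>u\<in>{1..U}. (\<Sum>i\<in>{1..N}. p u i) = 1"
    and Ys_sub: "Ys \<subseteq> {1..N}" and Ys_card: "card Ys = C"
    and Ys_opt: "\<forall>Y. Y \<subseteq> {1..N} \<and> card Y \<le> C \<longrightarrow>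
                    (\<Sum>i\<in>Y. phat U w p i) \<le> (\<Sum>i\<in>Ys. phat U w p i)"
    and Xs_rec: "\<forall>u\<in>{1..U}. Xs u \<subseteq> Ys \<and> card (Xs u) = R"
  shows "feasible N U C R Xs Ys \<and>
         (\<forall>X Y. feasible N U C R X Y \<longrightarrow>
            objective N U R w p X Y \<le> objective N U R w p Xs Ys)"
proof (intro conjI allI impI)
  show "feasible N U C R Xs Ys"
    unfolding feasible_def using Ys_sub Ys_card Xs_rec by auto
next
  fix X Y assume "feasible N U C R X Y"
  then have Y: "Y \<subseteq> {1..N}" "card Y \<le> C"
    and X: "\<forall>u\<in>{1..U}. finite (X u) \<and> card (X u) \<le> R"
    unfolding feasible_def by (auto intro: finite_subset)
  have "recommendation_value U R w X Y \<le> recommendation_value U R w Xs Ys"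
    using recommendation_value_le[OF R_pos _ X] recommendation_value_cached[OF R_pos Xs_rec]
      w_range by simp
  moreover have "(\<Sum>i\<in>Y. phat U w p i) \<le> (\<Sum>i\<in>Ys. phat U w p i)"
    using Ys_opt Y by blast
  ultimately show "objective N U R w p X Y \<le> objective N U R w p Xs Ys"
    by (simp add: objective_split[OF Y(1)] objective_split[OF Ys_sub])
qed

end
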